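(* Let $n\ge2$, distinct real $a_1,\dots,a_n$, $F(a)=\sum_{k=0}^nA_ka^k=\prod_{i=1}^n(a-a_i)$, signs $\epsilon_i\in\{\pm1\}$, reals $\xi_i$, $\Delta_i=\epsilon_i(a-a_i)$, $x=\sum_i\xi_i\Delta_i^{-1/2}$ on an open interval $I\subset(0,\infty)$ where all $\Delta_i>0$ and $\dot x\ne0$. Let $H=\Pi^2+aP_y^2$, $\Pi=\frac a{\dot x}P_a$, and let $G,Q_1,Q_2,S_1,S_2$ be defined by $$G=\sum_{k=0}^nA_{n-k}H^{n-k}P_y^{2k},\ Q_1=\sum_{k=1}^n\tilde b_kH^{n-k}\Pi P_y^{2k-1},\ Q_2=\sum_{k=1}^n\tilde c_kH^{n-k}P_y^{2k},\ S_1=Q_1+yG,\ S_2=Q_2+yQ_1+\tfrac{y^2}2G,$$ with $\tilde b_k=(-1)^k\sum_i\frac{\xi_i}{\sqrt{\Delta_i}}\sigma^i_{k-1}$ and $\tilde c_k=\frac{(-1)^{k+1}}2\big(\sum_i\frac{\xi_i^2}{\Delta_i}\sigma^i_{k-1}+\sum_{i\ne j}\frac{\xi_i\xi_j}{\sqrt{\Delta_i\Delta_j}}(\sigma^{ij}_{k-1}+a\sigma^{ij}_{k-2})\big)$. Then $$S_1^2-2G\,S_2=A_n^2\sum_{k,l=1}^n\mathcal{Q}_{kl}\,H^{2n-k-l}P_y^{2(k+l)},\qquad \mathcal{Q}_{kl}=(-1)^{k+l+1}\sum_{i=1}^n\epsilon_i\xi_i^2\,\sigma^i_{k-1}\sig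ma^i_{l-1}.$$
   Context: Symmetric functions: for each $i$, $\sigma^i_m$ ($-1\le m\le n$) by $\prod_{l\neq i}(a-a_l)=\sum_{m=0}^{n-1}(-1)^m\sigma^i_ma^{n-1-m}$ with $\sigma^i_{-1}=\sigma^i_n=0$; for $i\ne j$, $\sigma^{ij}_m$ ($-2\le m\le n$) by $\prod_{l\ne i,j}(a-a_l)=\sum_{m=0}^{n-2}(-1)^m\sigma^{ij}_ma^{n-2-m}$ with $\sigma^{ij}_{-2}=\sigma^{ij}_{-1}=\sigma^{ij}_{n-1}=\sigma^{ij}_n=0$. (Here $A_n=1$.) *)

theory Defs
  imports "HOL-Analysis.Analysis" "HOL-Computational_Algebra.Polynomial"
begin

definition Acoef :: "(nat \<Rightarrow> real) \<Rightarrow> nat \<Rightarrow> nat \<Rightarrow> real" where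
  "Acoef al n k = coeff (\<Prod>i\<in>{1..n}. [:- al i, 1:]) k"

text \<open>sigma^i_m: prod_{l<>i}(a-a_l) = sum_{m=0}^{n-1} (-1)^m sigma^i_m a^{n-1-m};
  zero outside 0..n-1 (in particular sigma^i_{-1} = sigma^i_n = 0).\<close>
definition sigma1 :: "(nat \<Rightarrow> real) \<Rightarrow> nat \<Rightarrow> nat \<Rightarrow> int \<Rightarrow> real" where
  "sigma1 al n i m =
     (if 0 \<le> m \<and> m \<le> int n - 1
      then (-1) ^ nat m * coeff (\<Prod>l\<in>{1..n} - {i}. [:- al l, 1:]) (n - 1 - nat m)
      else 0)"

text \<open>sigma^{ij}_m: prod_{l<>i,j}(a-a_l) = sum_{m=0}^{n-2} (-1)^m sigma^{ij}_m a^{n-2-m};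
  zero outside 0..n-2.\<close>
definition sigma2 :: "(nat \<Rightarrow> real) \<Rightarrow> nat \<Rightarrow> nat \<Rightarrow> nat \<Rightarrow> int \<Rightarrow> real" where
  "sigma2 al n i j m =
     (if 0 \<le> m \<and> m \<le> int n - 2
      then (-1) ^ nat m * coeff (\<Prod>l\<in>{1..n} - {i, j}. [:- al l, 1:]) (n - 2 - nat m)
      else 0)"

end

theory Submission
  imports Defs
begin

text \<open>
  With \<open>v = P\<^sub>y\<^sup>2\<close>, every sum over \<open>k\<close> in the statement is the homogenised evaluation
  at \<open>(H, v)\<close> of a product of linear factors, because \<open>\<sigma>\<^sup>i\<close> and \<open>\<sigma>\<^sup>i\<^sup>j\<close> are the signed
  coefficients of \<open>F\<^sub>i = \<Prod>\<^sub>l\<^sub>\<noteq>\<^sub>i (a - a\<^sub>l)\<close> and \<open>F\<^sub>i\<^sub>j\<close>: \<open>G = \<Prod>\<^sub>l (H - a\<^sub>l v)\<close>,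
  \<open>Q\<^sub>1 = -\<Pi> P\<^sub>y \<Sum>\<^sub>i w\<^sub>i F\<^sub>i\<close> and \<open>2 Q\<^sub>2 = v \<Sum>\<^sub>i w\<^sub>i\<^sup>2 F\<^sub>i + (H - a v) v \<Sum>\<^sub>i\<^sub>\<noteq>\<^sub>j w\<^sub>i w\<^sub>j F\<^sub>i\<^sub>j\<close>
  with \<open>w\<^sub>i = \<xi>\<^sub>i / \<surd>\<Delta>\<^sub>i\<close>. The \<open>y\<close>-terms cancel in \<open>S\<^sub>1\<^sup>2 - 2 G S\<^sub>2\<close>, and the rest follows
  from \<open>\<Pi>\<^sup>2 = H - a v\<close>, \<open>F\<^sub>i F\<^sub>j = G F\<^sub>i\<^sub>j\<close>, \<open>G = (H - a\<^sub>i v) F\<^sub>i\<close> and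
  \<open>w\<^sub>i\<^sup>2 (a\<^sub>i - a) = -\<epsilon>\<^sub>i \<xi>\<^sub>i\<^sup>2\<close>. The identity is algebraic in \<open>\<Pi>\<close>: of the hypotheses on \<open>x\<close>
  and \<open>I\<close>, only the positivity of the \<open>\<Delta>\<^sub>i\<close> at \<open>a\<close> is used.
\<close>

lemma degree_prod_linear:
  "finite S \<Longrightarrow> degree (\<Prod>l\<in>S. [:- c l, 1::'a::idom:]) = card S"
  by (subst degree_prod_eq_sum_degree) auto

lemma lead_coeff_prod_linear: "lead_coeff (\<Prod>l\<in>S. [:- c l, 1::'a::idom:]) = 1"
  by (simp add: lead_coeff_prod)

lemma homogeneous_sum_coeff_prod_linear:
  fixes c :: "'b \<Rightarrow> 'a::field"
  assumes "finite S"
  shows "(\<Sum>k=0..card S. coeff (\<Prod>l\<in>S. [:- c l, 1:]) (card S - k) * u^(card S - k) * v^k)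
       = (\<Prod>l\<in>S. u - c l * v)"
proof -
  let ?p = "\<Prod>l\<in>S. [:- c l, 1:]" and ?d = "card S"
  have deg: "degree ?p = ?d" using degree_prod_linear[OF assms] .
  have "(\<Sum>k=0..?d. coeff ?p (?d - k) * u^(?d - k) * v^k) = (\<Sum>m=0..?d. coeff ?p m * u^m * v^(?d - m))"
    by (subst sum.atLeastAtMost_rev) (intro sum.cong, auto)
  also have "\<dots> = (\<Prod>l\<in>S. u - c l * v)"
  proof (cases "v = 0")
    case True
    then have "(\<Sum>m=0..?d. coeff ?p m * u^m * v^(?d - m))
             = (\<Sum>m=0..?d. if m = ?d then coeff ?p m * u^m else 0)"
      by (intro sum.cong) auto
    then show ?thesis using True lead_coeff_prod_linear[of c S] deg by simp
  next
    case False
    have "(\<Sum>m=0..?d. coeff ?p m * u^m * v^(?d - m)) = v ^ ?d * poly ?p (u/v)"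
      unfolding poly_altdef deg sum_distrib_left atLeast0AtMost
      using False by (intro sum.cong) (auto simp: power_divide power_diff field_simps)
    also have "\<dots> = (\<Prod>l\<in>S. v * (u/v - c l))"
      by (simp add: poly_prod prod.distrib assms)
    also have "\<dots> = (\<Prod>l\<in>S. u - c l * v)"
      using False by (intro prod.cong) (auto simp: field_simps)
    finally show ?thesis .
  qed
  finally show ?thesis .
qed

lemma sum_atLeast1_atMost_Suc_shift: "(\<Sum>k=1..Suc m. f k) = (\<Sum>k=0..m. f (Suc k))"
  using sum.shift_bounds_cl_Suc_ivl[of f 0 m] by simp

lemma sigma1_generating_sum:
  assumes "i \<in> {1..n}"
  shows "(\<Sum>k=1..n. (-1)^k * sigma1 al n i (int k - 1) * u^(n-k) * v^(k-1))
       = - (\<Prod>l\<in>{1..n}-{i}. u - al l * v)"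
proof -
  obtain m where n: "n = Suc m" using assms by (cases n) auto
  let ?p = "\<Prod>l\<in>{1..n}-{i}. [:- al l, 1:]"
  have card: "card ({1..n}-{i}) = m" using assms n by simp
  have "(\<Sum>k=1..n. (-1)^k * sigma1 al n i (int k - 1) * u^(n-k) * v^(k-1))
      = (\<Sum>k=0..m. - (coeff ?p (m-k) * u^(m-k) * v^k))"
    unfolding n sum_atLeast1_atMost_Suc_shift by (intro sum.cong) (auto simp: sigma1_def n nat_diff_distrib)
  also have "\<dots> = - (\<Prod>l\<in>{1..n}-{i}. u - al l * v)"
    using homogeneous_sum_coeff_prod_linear[of "{1..n}-{i}" al u v] card by (simp add: sum_negf)
  finally show ?thesis .
qed

lemma sigma1_generating_sum':
  assumes "i \<in> {1..n}"
  shows "(\<Sum>k=1..n. (-1)^k * sigma1 al n i (int k - 1) * u^(n-k) * v^k)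
       = - v * (\<Prod>l\<in>{1..n}-{i}. u - al l * v)"
proof -
  have "v^k = v * v^(k-1)" if "k \<in> {1..n}" for k :: nat
    using that by (cases k) auto
  then have "(\<Sum>k=1..n. (-1)^k * sigma1 al n i (int k - 1) * u^(n-k) * v^k)
      = v * (\<Sum>k=1..n. (-1)^k * sigma1 al n i (int k - 1) * u^(n-k) * v^(k-1))"
    unfolding sum_distrib_left by (intro sum.cong) auto
  then show ?thesis using sigma1_generating_sum[OF assms] by simp
qed

lemma sigma2_generating_sum:
  assumes "i \<in> {1..n}" "j \<in> {1..n}" "i \<noteq> j"
  shows "(\<Sum>k=1..n. (-1)^(k+1) * (sigma2 al n i j (int k - 1) + a * sigma2 al n i j (int k - 2))
                    * u^(n-k) * v^k)
       = (u * v - a * v^2) * (\<Prod>l\<in>{1..n}-{i,j}. u - al l * v)"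
proof -
  have "n \<ge> 2" using assms by auto
  then obtain m where n: "n = Suc (Suc m)" by (metis add_2_eq_Suc le_Suc_ex)
  let ?p = "\<Prod>l\<in>{1..n}-{i,j}. [:- al l, 1:]"
  let ?h = "\<Sum>k=0..m. coeff ?p (m-k) * u^(m-k) * v^k"
  have card: "card ({1..n}-{i,j}) = m" using assms n by (simp add: card_Diff_subset)
  have lower: "(\<Sum>k=1..n. (-1)^(k+1) * sigma2 al n i j (int k - 1) * u^(n-k) * v^k) = u * v * ?h"
    unfolding n sum_atLeast1_atMost_Suc_shift sum.atLeast0_atMost_Suc sum_distrib_left
    by (simp add: sigma2_def n, intro sum.cong) (auto simp: nat_diff_distrib Suc_diff_le)
  have upper: "(\<Sum>k=1..n. (-1)^(k+1) * sigma2 al n i j (int k - 2) * u^(n-k) * v^k) = - (v^2 * ?h)"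
    unfolding n sum_atLeast1_atMost_Suc_shift sum.atLeast0_atMost_Suc_shift sum_distrib_left sum_negf[symmetric]
    by (simp add: sigma2_def, intro sum.cong) (auto simp: nat_diff_distrib power2_eq_square)
  have "(\<Sum>k=1..n. (-1)^(k+1) * (sigma2 al n i j (int k - 1) + a * sigma2 al n i j (int k - 2))
                    * u^(n-k) * v^k)
      = (\<Sum>k=1..n. (-1)^(k+1) * sigma2 al n i j (int k - 1) * u^(n-k) * v^k)
        + a * (\<Sum>k=1..n. (-1)^(k+1) * sigma2 al n i j (int k - 2) * u^(n-k) * v^k)"
    by (simp add: sum.distrib[symmetric] sum_distrib_left algebra_simps)
  also have "\<dots> = (u * v - a * v^2) * ?h"
    unfolding lower upper by (simp add: algebra_simps)
  also have "\<dots> = (u * v - a * v^2) * (\<Prod>l\<in>{1..n}-{i,j}. u - al l * v)"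
    using homogeneous_sum_coeff_prod_linear[of "{1..n}-{i,j}" al u v] card by simp
  finally show ?thesis .
qed

lemma Acoef_top: "Acoef al n n = 1"
  using lead_coeff_prod_linear[of al "{1..n}"] degree_prod_linear[of "{1..n}" al]
  by (simp add: Acoef_def)

lemma G_closed_form:
  "(\<Sum>k=0..n. Acoef al n (n - k) * u^(n-k) * Py^(2*k)) = (\<Prod>l\<in>{1..n}. u - al l * Py^2)"
  using homogeneous_sum_coeff_prod_linear[of "{1..n}" al u "Py^2"]
  by (simp add: Acoef_def power_mult)

lemma Q1_closed_form:
  "(\<Sum>k=1..n. ((-1)^k * (\<Sum>i=1..n. b i * sigma1 al n i (int k - 1))) * u^(n-k) * p * Py^(2*k-1))
   = - (p * Py * (\<Sum>i=1..n. b i * (\<Prod>l\<in>{1..n}-{i}. u - al l * Py^2)))"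
proof -
  have odd_power: "Py^(2*k-1) = Py * (Py^2)^(k-1)" if "k \<in> {1..n}" for k
    using that by (cases k) (auto simp: power_mult)
  have "(\<Sum>k=1..n. ((-1)^k * (\<Sum>i=1..n. b i * sigma1 al n i (int k - 1))) * u^(n-k) * p * Py^(2*k-1))
     = (\<Sum>k=1..n. \<Sum>i=1..n. p * Py * b i * ((-1)^k * sigma1 al n i (int k - 1) * u^(n-k) * (Py^2)^(k-1)))"
  proof (intro sum.cong refl)
    fix k assume k: "k \<in> {1..n}"
    show "((-1)^k * (\<Sum>i=1..n. b i * sigma1 al n i (int k - 1))) * u^(n-k) * p * Py^(2*k-1)
      = (\<Sum>i=1..n. p * Py * b i * ((-1)^k * sigma1 al n i (int k - 1) * u^(n-k) * (Py^2)^(k-1)))"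
      by (subst odd_power[OF k]) (simp add: sum_distrib_left sum_distrib_right mult_ac)
  qed
  also have "\<dots> = (\<Sum>i=1..n. p * Py * b i *
                    (\<Sum>k=1..n. (-1)^k * sigma1 al n i (int k - 1) * u^(n-k) * (Py^2)^(k-1)))"
    by (subst sum.swap) (simp add: sum_distrib_left)
  also have "\<dots> = (\<Sum>i=1..n. p * Py * b i * - (\<Prod>l\<in>{1..n}-{i}. u - al l * Py^2))"
    by (rule sum.cong[OF refl]) (simp only: sigma1_generating_sum)
  also have "\<dots> = - (p * Py * (\<Sum>i=1..n. b i * (\<Prod>l\<in>{1..n}-{i}. u - al l * Py^2)))"
    by (simp add: sum_distrib_left sum_negf mult_ac)
  finally show ?thesis .
qed

lemma Q2_closed_form:
  "(\<Sum>k=1..n. ((-1)^(k+1) / 2 *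
       ((\<Sum>i=1..n. d i * sigma1 al n i (int k - 1)) +
        (\<Sum>i\<in>{1..n}. \<Sum>j\<in>{1..n} - {i}.
           c i j * (sigma2 al n i j (int k - 1) + a * sigma2 al n i j (int k - 2))))) * u^(n-k) * Py^(2*k))
   = 1/2 * (Py^2 * (\<Sum>i=1..n. d i * (\<Prod>l\<in>{1..n}-{i}. u - al l * Py^2))
       + (u * Py^2 - a * (Py^2)^2) *
         (\<Sum>i\<in>{1..n}. \<Sum>j\<in>{1..n} - {i}. c i j * (\<Prod>l\<in>{1..n}-{i,j}. u - al l * Py^2)))"
  (is "_ = ?rhs")
proof -
  let ?v = "Py^2"
  define T1 where "T1 i k = (-1)^(k+1) * sigma1 al n i (int k - 1) * u^(n-k) * ?v^k" for i k
  define T2 where "T2 i j k = (-1)^(k+1) * (sigma2 al n i j (int k - 1) + a * sigma2 al n i j (int k - 2))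
                              * u^(n-k) * ?v^k" for i j k
  have "(\<Sum>k=1..n. ((-1)^(k+1) / 2 *
       ((\<Sum>i=1..n. d i * sigma1 al n i (int k - 1)) +
        (\<Sum>i\<in>{1..n}. \<Sum>j\<in>{1..n} - {i}.
           c i j * (sigma2 al n i j (int k - 1) + a * sigma2 al n i j (int k - 2))))) * u^(n-k) * Py^(2*k))
     = (\<Sum>k=1..n. 1/2 * ((\<Sum>i=1..n. d i * T1 i k) +
              (\<Sum>i\<in>{1..n}. \<Sum>j\<in>{1..n} - {i}. c i j * T2 i j k)))"
    unfolding power_mult by (intro sum.cong refl)
      (simp add: T1_def T2_def sum_distrib_left sum_distrib_right algebra_simps)
  also have "\<dots> = 1/2 * ((\<Sum>k=1..n. \<Sum>i=1..n. d i * T1 i k) +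
              (\<Sum>k=1..n. \<Sum>i\<in>{1..n}. \<Sum>j\<in>{1..n} - {i}. c i j * T2 i j k))"
    by (simp only: sum_distrib_left[symmetric] sum.distrib)
  also have "\<dots> = 1/2 * ((\<Sum>i=1..n. d i * (\<Sum>k=1..n. T1 i k)) +
              (\<Sum>i\<in>{1..n}. \<Sum>j\<in>{1..n} - {i}. c i j * (\<Sum>k=1..n. T2 i j k)))"
  proof -
    have "(\<Sum>k=1..n. \<Sum>i\<in>{1..n}. \<Sum>j\<in>{1..n} - {i}. c i j * T2 i j k)
        = (\<Sum>i\<in>{1..n}. \<Sum>j\<in>{1..n} - {i}. \<Sum>k=1..n. c i j * T2 i j k)"
      by (subst sum.swap) (rule sum.cong[OF refl], rule sum.swap)
    moreover have "(\<Sum>k=1..n. \<Sum>i=1..n. d i * T1 i k) = (\<Sum>i=1..n. \<Sum>k=1..n. d i * T1 i k)"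
      by (rule sum.swap)
    ultimately show ?thesis by (simp add: sum_distrib_left)
  qed
  also have "\<dots> = 1/2 * ((\<Sum>i=1..n. d i * (?v * (\<Prod>l\<in>{1..n}-{i}. u - al l * ?v))) +
              (\<Sum>i\<in>{1..n}. \<Sum>j\<in>{1..n} - {i}.
                 c i j * ((u * ?v - a * ?v^2) * (\<Prod>l\<in>{1..n}-{i,j}. u - al l * ?v))))"
  proof -
    have "(\<Sum>k=1..n. T1 i k) = ?v * (\<Prod>l\<in>{1..n}-{i}. u - al l * ?v)" if "i \<in> {1..n}" for i
      using sigma1_generating_sum'[OF that, of al u ?v] unfolding T1_def by (simp add: sum_negf)
    moreover have "(\<Sum>k=1..n. T2 i j k) = (u * ?v - a * ?v^2) * (\<Prod>l\<in>{1..n}-{i,j}. u - al l * ?v)"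
      if "i \<in> {1..n}" "j \<in> {1..n} - {i}" for i j
      using sigma2_generating_sum[of i n j] that unfolding T2_def by auto
    ultimately show ?thesis by (intro arg_cong2[where f="\<lambda>x y. 1/2 * (x + y)"] sum.cong refl) auto
  qed
  also have "\<dots> = ?rhs" by (simp add: sum_distrib_left algebra_simps)
  finally show ?thesis .
qed

lemma QQ_sum_closed_form:
  "(\<Sum>k=1..n. \<Sum>l=1..n. (-1)^(k+l+1) *
      (\<Sum>i=1..n. e i * sigma1 al n i (int k - 1) * sigma1 al n i (int l - 1)) * u^(2*n-k-l) * Py^(2*(k+l)))
   = - ((Py^2)^2 * (\<Sum>i=1..n. e i * (\<Prod>m\<in>{1..n}-{i}. u - al m * Py^2)^2))"
proof -
  let ?v = "Py^2"
  define X where "X i k = (-1)^k * sigma1 al n i (int k - 1) * u^(n-k) * ?v^k" for i k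
  have "(\<Sum>k=1..n. \<Sum>l=1..n. (-1)^(k+l+1) *
      (\<Sum>i=1..n. e i * sigma1 al n i (int k - 1) * sigma1 al n i (int l - 1)) * u^(2*n-k-l) * Py^(2*(k+l)))
    = (\<Sum>k=1..n. \<Sum>l=1..n. \<Sum>i=1..n. - (e i * X i k * X i l))"
  proof (intro sum.cong refl)
    fix k l assume "k \<in> {1..n}" "l \<in> {1..n}"
    then have "2*n-k-l = (n-k) + (n-l)" by auto
    then have "u^(2*n-k-l) = u^(n-k) * u^(n-l)" by (simp only: power_add)
    moreover have "Py^(2*(k+l)) = ?v^k * ?v^l" by (simp add: power_mult power_add)
    moreover have "(-1::real)^(k+l+1) = - ((-1)^k * (-1)^l)" by (simp add: power_add)
    ultimately show "(-1)^(k+l+1) *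
      (\<Sum>i=1..n. e i * sigma1 al n i (int k - 1) * sigma1 al n i (int l - 1)) * u^(2*n-k-l) * Py^(2*(k+l))
      = (\<Sum>i=1..n. - (e i * X i k * X i l))"
      unfolding X_def by (simp add: sum_distrib_left sum_distrib_right sum_negf mult_ac)
  qed
  also have "\<dots> = (\<Sum>k=1..n. \<Sum>i=1..n. \<Sum>l=1..n. - (e i * X i k * X i l))"
    by (rule sum.cong[OF refl], rule sum.swap)
  also have "\<dots> = (\<Sum>i=1..n. \<Sum>k=1..n. \<Sum>l=1..n. - (e i * X i k * X i l))"
    by (rule sum.swap)
  also have "\<dots> = (\<Sum>i=1..n. - (e i * (\<Sum>k=1..n. X i k)^2))"
    by (simp add: power2_eq_square sum_product sum_distrib_left sum_negf mult_ac)
  also have "\<dots> = (\<Sum>i=1..n. - (e i * (?v * (\<Prod>m\<in>{1..n}-{i}. u - al m * ?v))^2))"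
    unfolding X_def by (rule sum.cong[OF refl]) (simp only: sigma1_generating_sum', simp)
  also have "\<dots> = - ((Py^2)^2 * (\<Sum>i=1..n. e i * (\<Prod>m\<in>{1..n}-{i}. u - al m * Py^2)^2))"
    by (simp add: sum_distrib_left sum_negf power_mult_distrib mult_ac)
  finally show ?thesis .
qed

lemma S1_S2_shift_invariant:
  fixes q1 q2 g y :: "'a::field_char_0"
  shows "(q1 + y * g)^2 - 2 * g * (q2 + y * q1 + y^2 / 2 * g) = q1^2 - 2 * g * q2"
  by (simp add: algebra_simps power2_eq_square)

lemma quadratic_identity_linear_products:
  fixes c w e :: "'i \<Rightarrow> 'a::comm_ring_1"
  assumes "finite S"
    and p_sq: "p^2 = u - a * Py^2"
    and weights: "\<forall>i\<in>S. w i^2 * (c i - a) = - e i"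
  shows "(p * Py * (\<Sum>i\<in>S. w i * (\<Prod>l\<in>S-{i}. u - c l * Py^2)))^2
     - (\<Prod>l\<in>S. u - c l * Py^2) *
       (Py^2 * (\<Sum>i\<in>S. w i^2 * (\<Prod>l\<in>S-{i}. u - c l * Py^2))
        + (u * Py^2 - a * (Py^2)^2) *
          (\<Sum>i\<in>S. \<Sum>j\<in>S-{i}. w i * w j * (\<Prod>l\<in>S-{i,j}. u - c l * Py^2)))
     = - ((Py^2)^2 * (\<Sum>i\<in>S. e i * (\<Prod>l\<in>S-{i}. u - c l * Py^2)^2))"
proof -
  define v where "v = Py^2"
  define G where "G = (\<Prod>l\<in>S. u - c l * v)"
  define P where "P i = (\<Prod>l\<in>S-{i}. u - c l * v)" for i
  define Q where "Q i j = (\<Prod>l\<in>S-{i,j}. u - c l * v)" for i j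
  have G_split: "G = (u - c i * v) * P i" if "i \<in> S" for i
    unfolding G_def P_def using \<open>finite S\<close> that by (rule prod.remove)
  have P_mult: "P i * P j = G * Q i j" if "i \<in> S" "j \<in> S - {i}" for i j
  proof -
    have "S - {i} - {j} = S - {i,j}" "S - {j} - {i} = S - {i,j}" by auto
    moreover have "P i = (u - c j * v) * (\<Prod>l\<in>S-{i}-{j}. u - c l * v)"
      unfolding P_def using that \<open>finite S\<close> by (intro prod.remove) auto
    moreover have "P j = (u - c i * v) * (\<Prod>l\<in>S-{j}-{i}. u - c l * v)"
      unfolding P_def using that \<open>finite S\<close> by (intro prod.remove) auto
    ultimately have "P i = (u - c j * v) * Q i j" "P j = (u - c i * v) * Q i j"
      unfolding Q_def by simp_all
    then show ?thesis using G_split[OF \<open>i \<in> S\<close>] by (simp add: mult_ac)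
  qed
  define X where "X = (\<Sum>i\<in>S. w i^2 * P i^2)"
  define Y where "Y = (\<Sum>i\<in>S. \<Sum>j\<in>S-{i}. w i * w j * Q i j)"
  define Z where "Z = (\<Sum>i\<in>S. w i^2 * P i)"
  have "(\<Sum>i\<in>S. w i * P i)^2 = (\<Sum>i\<in>S. w i^2 * P i^2 + (\<Sum>j\<in>S-{i}. w i * P i * (w j * P j)))"
    unfolding power2_eq_square sum_product
    using \<open>finite S\<close> by (intro sum.cong refl) (simp add: sum.remove mult_ac)
  also have "\<dots> = X + G * Y"
    unfolding X_def Y_def sum_distrib_left sum.distrib
  proof (intro arg_cong2[where f="(+)"] refl sum.cong)
    fix i j assume "i \<in> S" "j \<in> S - {i}"
    have "w i * P i * (w j * P j) = w i * w j * (P i * P j)" by (simp add: mult_ac)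
    then show "w i * P i * (w j * P j) = G * (w i * w j * Q i j)"
      using P_mult[OF \<open>i \<in> S\<close> \<open>j \<in> S - {i}\<close>] by (simp add: mult_ac)
  qed
  finally have square: "(\<Sum>i\<in>S. w i * P i)^2 = X + G * Y" .
  have "(u - a * v) * X - G * Z = (\<Sum>i\<in>S. w i^2 * P i * ((u - a * v) * P i - G))"
    unfolding X_def Z_def by (simp add: sum_distrib_left sum_subtractf[symmetric] algebra_simps power2_eq_square)
  also have "\<dots> = (\<Sum>i\<in>S. - (v * (e i * P i^2)))"
  proof (intro sum.cong refl)
    fix i assume "i \<in> S"
    then have "w i^2 * P i * ((u - a * v) * P i - G) = (w i^2 * (c i - a)) * v * P i^2"
      by (simp add: G_split algebra_simps power2_eq_square)
    then show "w i^2 * P i * ((u - a * v) * P i - G) = - (v * (e i * P i^2))"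
      using weights \<open>i \<in> S\<close> by simp
  qed
  finally have "v * ((u - a * v) * X - G * Z) = - (v^2 * (\<Sum>i\<in>S. e i * P i^2))"
    by (simp add: sum_negf sum_distrib_left power2_eq_square mult.assoc)
  then have "(p * Py * (\<Sum>i\<in>S. w i * P i))^2 - G * (v * Z + (u * v - a * v^2) * Y)
             = - (v^2 * (\<Sum>i\<in>S. e i * P i^2))"
    unfolding power_mult_distrib square p_sq v_def[symmetric]
    by (simp add: algebra_simps power2_eq_square)
  then show ?thesis unfolding G_def P_def Q_def Y_def Z_def v_def .
qed

lemma inverse_sqrt_weight:
  fixes \<epsilon> \<Delta> \<xi> :: real
  assumes "\<epsilon> = 1 \<or> \<epsilon> = -1" and "\<Delta> = \<epsilon> * (a - c)" and "\<Delta> > 0"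
  shows "(\<xi> / sqrt \<Delta>)^2 * (c - a) = - (\<epsilon> * \<xi>^2)"
proof -
  have "c - a = - (\<epsilon> * \<Delta>)" using assms(1,2) by auto
  then show ?thesis using \<open>\<Delta> > 0\<close> by (simp add: power_divide)
qed

theorem proposition12:
  fixes n :: nat and al \<epsilon> \<xi> :: "nat \<Rightarrow> real" and I :: "real set"
    and \<Delta> :: "nat \<Rightarrow> real \<Rightarrow> real" and x :: "real \<Rightarrow> real"
    and a y Pa Py :: real
  assumes "n \<ge> 2"
    and "inj_on al {1..n}"
    and "\<forall>i\<in>{1..n}. \<epsilon> i = 1 \<or> \<epsilon> i = -1"
    and "open I" and "is_interval I" and "I \<subseteq> {0<..}"
    and "\<forall>i b. \<Delta> i b = \<epsilon> i * (b - al i)"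
    and "\<forall>b. x b = (\<Sum>i=1..n. \<xi> i * \<Delta> i b powr (-1/2))"
    and "\<forall>b\<in>I. \<forall>i\<in>{1..n}. \<Delta> i b > 0"
    and "\<forall>b\<in>I. deriv x b \<noteq> 0"
    and "a \<in> I"
  shows
   "let Pi = a / deriv x a * Pa;
        H = Pi^2 + a * Py^2;
        bt = (\<lambda>k::nat. (-1::real)^k *
               (\<Sum>i=1..n. \<xi> i / sqrt (\<Delta> i a) * sigma1 al n i (int k - 1)));
        ct = (\<lambda>k::nat. (-1::real)^(k+1) / 2 *
               ((\<Sum>i=1..n. \<xi> i ^ 2 / \<Delta> i a * sigma1 al n i (int k - 1)) +
                (\<Sum>i\<in>{1..n}. \<Sum>j\<in>{1..n} - {i}.
                   \<xi> i * \<xi> j / sqrt (\<Delta> i a * \<Delta> j a) *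
                   (sigma2 al n i j (int k - 1) + a * sigma2 al n i j (int k - 2)))));
        G = (\<Sum>k=0..n. Acoef al n (n - k) * H^(n - k) * Py^(2*k));
        Q1 = (\<Sum>k=1..n. bt k * H^(n - k) * Pi * Py^(2*k - 1));
        Q2 = (\<Sum>k=1..n. ct k * H^(n - k) * Py^(2*k));
        S1 = Q1 + y * G;
        S2 = Q2 + y * Q1 + y^2 / 2 * G;
        QQ = (\<lambda>k l::nat. (-1::real)^(k+l+1) *
               (\<Sum>i=1..n. \<epsilon> i * \<xi> i ^ 2 * sigma1 al n i (int k - 1) * sigma1 al n i (int l - 1)))
    in S1^2 - 2 * G * S2 =
       (Acoef al n n)^2 * (\<Sum>k=1..n. \<Sum>l=1..n. QQ k l * H^(2*n - k - l) * Py^(2*(k+l)))"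
proof -
  define p where "p = a / deriv x a * Pa"
  define H where "H = p^2 + a * Py^2"
  define w where "w i = \<xi> i / sqrt (\<Delta> i a)" for i
  have \<Delta>_pos: "\<Delta> i a > 0" if "i \<in> {1..n}" for i
    using assms(9,11) that by blast
  have weights: "\<forall>i\<in>{1..n}. w i^2 * (al i - a) = - (\<epsilon> i * \<xi> i^2)"
    unfolding w_def using assms(3,7) \<Delta>_pos by (blast intro: inverse_sqrt_weight)
  have "w i^2 = \<xi> i ^ 2 / \<Delta> i a" if "i \<in> {1..n}" for i
    using \<Delta>_pos[OF that] by (simp add: w_def power_divide)
  then have w_sq: "(\<Sum>i=1..n. \<xi> i ^ 2 / \<Delta> i a * (\<Prod>l\<in>{1..n}-{i}. H - al l * Py^2))
      = (\<Sum>i=1..n. w i^2 * (\<Prod>l\<in>{1..n}-{i}. H - al l * Py^2))"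
    by (intro sum.cong) simp_all
  have w_mult: "\<xi> i * \<xi> j / sqrt (\<Delta> i a * \<Delta> j a) = w i * w j" for i j
    by (simp add: w_def real_sqrt_mult)
  have "p^2 = H - a * Py^2" by (simp add: H_def)
  from quadratic_identity_linear_products[of "{1..n}", OF _ this weights]
  show ?thesis
    unfolding Let_def S1_S2_shift_invariant p_def[symmetric] H_def[symmetric]
      G_closed_form Q1_closed_form Q2_closed_form QQ_sum_closed_form Acoef_top w_sq w_mult
      w_def[symmetric]
    by (simp add: power2_eq_square mult_ac)
qed

end
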